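(* Let $a\le b\le c$ be positive integers, let $\epsilon,d$ satisfy $0<2\epsilon\le d$, and let $m$ be sufficiently large (in terms of $a,b,c,\epsilon,d$). Let $H$ be a $3$-graph and let $V_1,V_2,V_3\subseteq V(H)$ be mutually disjoint with $(V_1,V_2,V_3)$ being $(\epsilon,d)$-regular, such that $|V_1|\le|V_2|\le|V_3|=m$ and \[ \frac{|V_1|}a\ge\frac{|V_2|}b\ge\frac{|V_3|}c . \] Then there is a $K_{a,b,c}$-tiling in $H[V_1\cup V_2\cup V_3]$ covering all but at most $\frac ca\epsilon(|V_1|+|V_2|+|V_3|)$ vertices of $V_1\cup V_2\cup V_3$.
   Context: For mutually disjoint nonempty vertex sets $V_1,V_2,V_3$ of a $3$-graph $H$, $e(V_1,V_2,V_3)$ is the number of edges with one vertex in each $V_i$ and $d(V_1,V_2,V_3)=e(V_1,V_2,V_3)/(|V_1||V_2||V_3|)$. The triple $(V_1,V_2,V_3)$ is $(\epsilon,d)$-regular if $|d(A_1,A_2,A_3)-d|\le\epsilon$ for all $A_i\subseteq V_i$ with $|A_i|\ge\epsilon|V_i|$, $i\in[3]$. $K_{a,b,c}$ is the complete $3$-partite $3$-graph with parts of sizes $a,b,c$; a $K_{a,b,c}$-tiling is a collection of vertex-disjoint copies of $K_{a,b,c}$. *)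

theory Defs
  imports Complex_Main
begin

definition three_graph :: "'a set \<Rightarrow> 'a set set \<Rightarrow> bool" where
  "three_graph VH H \<longleftrightarrow> (\<forall>e\<in>H. e \<subseteq> VH \<and> card e = 3)"

definition cross_edges :: "'a set set \<Rightarrow> 'a set \<Rightarrow> 'a set \<Rightarrow> 'a set \<Rightarrow> nat" where
  "cross_edges H V1 V2 V3 =
     card {e\<in>H. \<exists>x\<in>V1. \<exists>y\<in>V2. \<exists>z\<in>V3. e = {x, y, z}}"

definition density :: "'a set set \<Rightarrow> 'a set \<Rightarrow> 'a set \<Rightarrow> 'a set \<Rightarrow> real" where
  "density H V1 V2 V3 =
     real (cross_edges H V1 V2 V3) / (real (card V1) * real (card V2) * real (card V3))"

definition eps_d_regular :: "'a set set \<Rightarrow> real \<Rightarrow> real \<Rightarrow> 'a set \<Rightarrow> 'a set \<Rightarrow> 'a set \<Rightarrow> bool" where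
  "eps_d_regular H \<epsilon> d V1 V2 V3 \<longleftrightarrow>
     (\<forall>A1 A2 A3. A1 \<subseteq> V1 \<and> A2 \<subseteq> V2 \<and> A3 \<subseteq> V3 \<and>
        real (card A1) \<ge> \<epsilon> * real (card V1) \<and>
        real (card A2) \<ge> \<epsilon> * real (card V2) \<and>
        real (card A3) \<ge> \<epsilon> * real (card V3) \<longrightarrow>
        \<bar>density H A1 A2 A3 - d\<bar> \<le> \<epsilon>)"

definition is_Kabc_copy :: "'a set set \<Rightarrow> 'a set \<Rightarrow> nat \<Rightarrow> nat \<Rightarrow> nat \<Rightarrow> 'a set \<times> 'a set \<times> 'a set \<Rightarrow> bool" where
  "is_Kabc_copy H U a b c T \<longleftrightarrow> (case T of (A, B, C) \<Rightarrow>
     A \<union> B \<union> C \<subseteq> U \<and> finite A \<and> finite B \<and> finite C \<and>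
     card A = a \<and> card B = b \<and> card C = c \<and>
     A \<inter> B = {} \<and> A \<inter> C = {} \<and> B \<inter> C = {} \<and>
     (\<forall>x\<in>A. \<forall>y\<in>B. \<forall>z\<in>C. {x, y, z} \<in> H))"

definition copy_verts :: "'a set \<times> 'a set \<times> 'a set \<Rightarrow> 'a set" where
  "copy_verts T = (case T of (A, B, C) \<Rightarrow> A \<union> B \<union> C)"

definition is_Kabc_tiling :: "'a set set \<Rightarrow> 'a set \<Rightarrow> nat \<Rightarrow> nat \<Rightarrow> nat \<Rightarrow> ('a set \<times> 'a set \<times> 'a set) set \<Rightarrow> bool" where
  "is_Kabc_tiling H U a b c \<T> \<longleftrightarrow>
     (\<forall>T\<in>\<T>. is_Kabc_copy H U a b c T) \<and>
     (\<forall>T\<in>\<T>. \<forall>T'\<in>\<T>. T \<noteq> T' \<longrightarrow> copy_verts T \<inter> copy_verts T' = {})"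

end

theory Submission
  imports Defs "HOL-Analysis.Convex"
begin

text \<open>
  Regularity makes every triple of subsets R_i \<subseteq> V_i with |R_i| \<ge> \<epsilon>|V_i| dense, and a
  Kovari-Sos-Turan type argument (Cauchy-Schwarz on common neighbourhoods, iterated) finds a
  complete c \<times> c \<times> c box inside any dense triple of large sets. We cut copies of K_{a,b,c} out of such boxes
  greedily, orienting each copy as one of the six permutations of (a, b, c). The orientation is
  chosen so that the excesses s_i = |R_i| - \<epsilon>|V_i| stay, up to an additive error 2c, ordered
  (s_1 \<le> s_2 \<le> s_3) and in decreasing ratios (s_1/a \<ge> s_2/b \<ge> s_3/c), just as the part sizes
  are initially. Once some excess falls below 4c^2 these constraints force all of them to be
  O(c^4), so at most \<epsilon>(|V_1| + |V_2| + |V_3|) + O(c^4) vertices remain uncovered; for a < c the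
  extra factor c/a \<ge> 1 + 1/c absorbs the O(c^4) term once m is large, and for a = b = c the
  three parts have equal size and no error term arises.
\<close>

lemma card_relation_eq_sum_fibres:
  assumes "finite X" "finite P" "R \<subseteq> X \<times> P"
  shows "card R = (\<Sum>p\<in>P. card {x\<in>X. (x, p) \<in> R})"
proof -
  have "R = (\<Union>p\<in>P. {x\<in>X. (x, p) \<in> R} \<times> {p})" using assms(3) by auto
  also have "card \<dots> = (\<Sum>p\<in>P. card ({x\<in>X. (x, p) \<in> R} \<times> {p}))"
    by (rule card_UN_disjoint) (use assms in auto)
  finally show ?thesis by (simp add: card_cartesian_product)
qed

lemma exists_vertex_with_dense_link:
  fixes \<delta> :: real
  assumes X: "finite X" and P: "finite P" and R: "R \<subseteq> X \<times> P" and "0 < \<delta>"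
    and dense: "\<delta> * card X * card P \<le> card R" and large: "2 / \<delta>\<^sup>2 \<le> card X"
  shows "\<exists>x\<in>X. \<delta>\<^sup>2 / 2 * card X * card P \<le> card {(y, p)\<in>R. y \<noteq> x \<and> (x, p) \<in> R}"
proof -
  define deg where "deg p = card {x\<in>X. (x, p) \<in> R}" for p
  define N where "N x = {p\<in>P. (x, p) \<in> R}" for x
  have "0 < 2 / \<delta>\<^sup>2" using \<open>0 < \<delta>\<close> by simp
  then have X0: "0 < card X" using large by linarith
  have link_card: "card (R \<inter> (X \<times> N x)) = (\<Sum>p\<in>N x. deg p)" for x
    unfolding deg_def
    by (subst card_relation_eq_sum_fibres[of X "N x"]) (use X P in \<open>auto simp: N_def intro!: sum.cong arg_cong[where f=card]\<close>)
  \<comment> \<open>double counting: both sides count triples (x, y, p) with (x, p), (y, p) \<in> R\<close>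
  have double_count: "(\<Sum>x\<in>X. real (\<Sum>p\<in>N x. deg p)) = (\<Sum>p\<in>P. real (deg p) ^ 2)"
  proof -
    have "(\<Sum>x\<in>X. real (\<Sum>p\<in>N x. deg p)) = (\<Sum>x\<in>X. \<Sum>p\<in>P. if (x, p) \<in> R then real (deg p) else 0)"
      unfolding N_def by (auto simp: sum.inter_filter[OF P] intro!: sum.cong)
    also have "\<dots> = (\<Sum>p\<in>P. \<Sum>x\<in>X. if (x, p) \<in> R then real (deg p) else 0)"
      by (rule sum.swap)
    also have "\<dots> = (\<Sum>p\<in>P. real (deg p) ^ 2)"
      by (rule sum.cong) (simp_all add: sum.inter_filter[OF X, symmetric] deg_def power2_eq_square)
    finally show ?thesis .
  qed
  have "(\<delta> * card X * card P)\<^sup>2 \<le> (\<Sum>p\<in>P. real (deg p))\<^sup>2"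
    using dense \<open>0 < \<delta>\<close> card_relation_eq_sum_fibres[OF X P R] by (intro power_mono) (auto simp: deg_def)
  also have "\<dots> \<le> (\<Sum>p\<in>P. real (deg p) ^ 2) * card P"
    by (rule sum_squared_le_sum_of_squares)
  finally have sum_ge: "(\<delta> * card X)\<^sup>2 * card P \<le> (\<Sum>x\<in>X. real (\<Sum>p\<in>N x. deg p))"
    unfolding double_count using P by (cases "card P = 0") (simp_all add: power2_eq_square mult_ac)
  obtain x where x: "x \<in> X" and x_big: "\<delta>\<^sup>2 * card X * card P \<le> real (\<Sum>p\<in>N x. deg p)"
  proof (cases "card P = 0")
    case True
    obtain x where "x \<in> X" using X0 by (metis card_gt_0_iff ex_in_conv)
    then show thesis using True by (intro that[of x]) (simp_all add: sum_nonneg)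
  next
    case False
    have "\<exists>x\<in>X. \<delta>\<^sup>2 * card X * card P \<le> real (\<Sum>p\<in>N x. deg p)"
    proof (rule ccontr)
      assume "\<not> ?thesis"
      then have "(\<Sum>x\<in>X. real (\<Sum>p\<in>N x. deg p)) < (\<Sum>x\<in>X. \<delta>\<^sup>2 * card X * card P)"
        using X0 X by (intro sum_strict_mono) (auto simp: not_le)
      then show False using sum_ge by (simp add: power2_eq_square mult_ac)
    qed
    then show thesis using that by blast
  qed
  define L where "L = {(y, p)\<in>R. y \<noteq> x \<and> (x, p) \<in> R}"
  have "R \<inter> (X \<times> N x) = L \<union> {x} \<times> N x"
    using R x by (auto simp: N_def L_def)
  then have "card (R \<inter> (X \<times> N x)) \<le> card L + card ({x} \<times> N x)"
    by (simp only: card_Un_le)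
  moreover have "card ({x} \<times> N x) \<le> card P"
    using P by (simp add: card_cartesian_product N_def card_mono)
  moreover have "card P \<le> \<delta>\<^sup>2 / 2 * card X * card P"
    using large \<open>0 < \<delta>\<close> mult_right_mono[of 1 "\<delta>\<^sup>2 / 2 * card X" "card P"] by (simp add: field_simps)
  ultimately show ?thesis
    using x x_big link_card[of x] unfolding L_def by (intro bexI[OF _ x]) linarith
qed

lemma common_neighbourhood_step:
  fixes \<delta> \<delta>0 :: real and X :: "'a set" and P :: "'b set"
  assumes "0 < \<delta>" "0 < \<delta>0"
    and IH: "\<And>(X :: 'a set) (P :: 'b set) R. finite X \<Longrightarrow> finite P \<Longrightarrow> N0 \<le> card X \<Longrightarrow> R \<subseteq> X \<times> P \<Longrightarrow>
      \<delta>\<^sup>2 / 2 * card X * card P \<le> card R \<Longrightarrow>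
      \<exists>S\<subseteq>X. card S = s \<and> \<delta>0 * card P \<le> card {p\<in>P. \<forall>x\<in>S. (x, p) \<in> R}"
    and X: "finite X" and P: "finite P" and large: "max (N0 + 1) (nat \<lceil>2 / \<delta>\<^sup>2\<rceil>) \<le> card X"
    and R: "R \<subseteq> X \<times> P" and dense: "\<delta> * card X * card P \<le> card R"
  shows "\<exists>S\<subseteq>X. card S = Suc s \<and> \<delta>0 * (\<delta>\<^sup>2 / 2) * card P \<le> card {p\<in>P. \<forall>x\<in>S. (x, p) \<in> R}"
proof -
  define \<delta>2 where "\<delta>2 = \<delta>\<^sup>2 / 2"
  have "0 < \<delta>2" using assms(1) by (simp add: \<delta>2_def)
  have "2 / \<delta>\<^sup>2 \<le> card X" using large by linarith
  then obtain x where x: "x \<in> X"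
    and "\<delta>2 * card X * card P \<le> card {(y, p)\<in>R. y \<noteq> x \<and> (x, p) \<in> R}"
    using exists_vertex_with_dense_link[OF X P R assms(1) dense] by (auto simp: \<delta>2_def)
  \<comment> \<open>apply the induction hypothesis to the link of x, i.e. to R restricted to (X - {x}) \<times> N(x)\<close>
  define Nx where "Nx = {p\<in>P. (x, p) \<in> R}"
  define Rx where "Rx = {(y, p)\<in>R. y \<noteq> x \<and> (x, p) \<in> R}"
  have Rx: "Rx \<subseteq> (X - {x}) \<times> Nx" using R by (auto simp: Rx_def Nx_def)
  have "finite Nx" using P by (simp add: Nx_def)
  have Nx_le: "card Nx \<le> card P" using P by (auto simp: Nx_def intro: card_mono)
  have X'_le: "card (X - {x}) \<le> card X" using X by (simp add: card_mono)
  have Rx_ge: "\<delta>2 * card X * card P \<le> card Rx"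
    using \<open>\<delta>2 * card X * card P \<le> _\<close> by (simp add: Rx_def)
  have "card Rx \<le> card X * card Nx"
    using card_mono[OF _ Rx] X \<open>finite Nx\<close> X'_le
    by (simp add: card_cartesian_product) (meson le_trans mult_le_mono1)
  then have "real (card X) * (\<delta>2 * card P) \<le> real (card X) * card Nx"
    using Rx_ge by (simp add: mult_ac flip: of_nat_mult)
  moreover have "0 < card X" using x X card_gt_0_iff by blast
  ultimately have Nx_ge: "\<delta>2 * card P \<le> card Nx" by simp
  have "\<delta>2 * card (X - {x}) * card Nx \<le> \<delta>2 * card X * card P"
    using \<open>0 < \<delta>2\<close> X'_le Nx_le by (intro mult_mono) auto
  then have "\<delta>2 * card (X - {x}) * card Nx \<le> card Rx" using Rx_ge by linarith
  moreover have "N0 \<le> card (X - {x})" using large x X by simp linarith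
  ultimately obtain S0 where S0: "S0 \<subseteq> X - {x}" "card S0 = s"
    and S0_common: "\<delta>0 * card Nx \<le> card {p\<in>Nx. \<forall>y\<in>S0. (y, p) \<in> Rx}"
    using IH[OF finite_Diff[OF X] \<open>finite Nx\<close> _ Rx] unfolding \<delta>2_def by blast
  have "finite S0" "x \<notin> S0" using S0 X finite_subset by blast+
  then have "card (insert x S0) = Suc s" using S0 by simp
  moreover have "card {p\<in>Nx. \<forall>y\<in>S0. (y, p) \<in> Rx} \<le> card {p\<in>P. \<forall>y\<in>insert x S0. (y, p) \<in> R}"
    using P by (intro card_mono) (auto simp: Nx_def Rx_def)
  moreover have "\<delta>0 * (\<delta>2 * card P) \<le> \<delta>0 * card Nx"
    using Nx_ge \<open>0 < \<delta>0\<close> by simp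
  ultimately show ?thesis
    using S0 x S0_common unfolding \<delta>2_def by (intro exI[of _ "insert x S0"]) (auto simp: mult.assoc)
qed

lemma dense_relation_common_neighbourhood:
  fixes \<delta> :: real
  assumes "0 < \<delta>"
  shows "\<exists>N (\<delta>' :: real). 0 < \<delta>' \<and> (\<forall>(X :: 'a set) (P :: 'b set) R.
           finite X \<longrightarrow> finite P \<longrightarrow> N \<le> card X \<longrightarrow> R \<subseteq> X \<times> P \<longrightarrow>
           \<delta> * card X * card P \<le> card R \<longrightarrow>
           (\<exists>S\<subseteq>X. card S = s \<and> \<delta>' * card P \<le> card {p\<in>P. \<forall>x\<in>S. (x, p) \<in> R}))"
  using assms
proof (induction s arbitrary: \<delta>)
  case 0
  show ?case by (intro exI[of _ 0] exI[of _ 1] conjI allI impI exI[of _ "{}"]) auto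
next
  case (Suc s)
  have "0 < \<delta>\<^sup>2 / 2" using Suc.prems by simp
  obtain N0 and \<delta>0 :: real where "0 < \<delta>0" and IH: "\<forall>(X :: 'a set) (P :: 'b set) R.
      finite X \<longrightarrow> finite P \<longrightarrow> N0 \<le> card X \<longrightarrow> R \<subseteq> X \<times> P \<longrightarrow>
      \<delta>\<^sup>2 / 2 * card X * card P \<le> card R \<longrightarrow>
      (\<exists>S\<subseteq>X. card S = s \<and> \<delta>0 * card P \<le> card {p\<in>P. \<forall>x\<in>S. (x, p) \<in> R})"
    using Suc.IH[OF \<open>0 < \<delta>\<^sup>2 / 2\<close>] by auto
  show ?case
  proof (intro exI[of _ "max (N0 + 1) (nat \<lceil>2 / \<delta>\<^sup>2\<rceil>)"] exI[of _ "\<delta>0 * (\<delta>\<^sup>2 / 2)"] conjI allI impI)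
    show "0 < \<delta>0 * (\<delta>\<^sup>2 / 2)" using \<open>0 < \<delta>0\<close> \<open>0 < \<delta>\<^sup>2 / 2\<close> by simp
    fix X :: "'a set" and P :: "'b set" and R
    assume "finite X" "finite P" "max (N0 + 1) (nat \<lceil>2 / \<delta>\<^sup>2\<rceil>) \<le> card X" "R \<subseteq> X \<times> P"
      "\<delta> * card X * card P \<le> card R"
    then show "\<exists>S\<subseteq>X. card S = Suc s \<and> \<delta>0 * (\<delta>\<^sup>2 / 2) * card P \<le> card {p\<in>P. \<forall>x\<in>S. (x, p) \<in> R}"
      using common_neighbourhood_step[OF Suc.prems \<open>0 < \<delta>0\<close> IH[rule_format]] by blast
  qed
qed

lemma dense_triple_relation_contains_box:
  fixes \<delta> :: real
  assumes "0 < \<delta>"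
  shows "\<exists>N. \<forall>(X :: 'a set) (Y :: 'b set) (Z :: 'c set) Q.
     finite X \<longrightarrow> finite Y \<longrightarrow> finite Z \<longrightarrow> N \<le> card X \<longrightarrow> N \<le> card Y \<longrightarrow> N \<le> card Z \<longrightarrow>
     \<delta> * card X * card Y * card Z \<le> card {(x, y, z). x \<in> X \<and> y \<in> Y \<and> z \<in> Z \<and> Q x y z} \<longrightarrow>
     (\<exists>S\<subseteq>X. \<exists>T\<subseteq>Y. \<exists>W\<subseteq>Z. card S = s \<and> card T = s \<and> card W = s \<and>
        (\<forall>x\<in>S. \<forall>y\<in>T. \<forall>z\<in>W. Q x y z))"
proof -
  obtain N1 and \<delta>1 :: real where "0 < \<delta>1" and K1: "\<forall>(X :: 'a set) (P :: ('b \<times> 'c) set) R.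
      finite X \<longrightarrow> finite P \<longrightarrow> N1 \<le> card X \<longrightarrow> R \<subseteq> X \<times> P \<longrightarrow> \<delta> * card X * card P \<le> card R \<longrightarrow>
      (\<exists>S\<subseteq>X. card S = s \<and> \<delta>1 * card P \<le> card {p\<in>P. \<forall>x\<in>S. (x, p) \<in> R})"
    using dense_relation_common_neighbourhood[OF assms, of s] by (elim exE conjE) (rule that)
  obtain N2 and \<delta>2 :: real where "0 < \<delta>2" and K2: "\<forall>(X :: 'b set) (P :: 'c set) R.
      finite X \<longrightarrow> finite P \<longrightarrow> N2 \<le> card X \<longrightarrow> R \<subseteq> X \<times> P \<longrightarrow> \<delta>1 * card X * card P \<le> card R \<longrightarrow>
      (\<exists>S\<subseteq>X. card S = s \<and> \<delta>2 * card P \<le> card {p\<in>P. \<forall>x\<in>S. (x, p) \<in> R})"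
    using dense_relation_common_neighbourhood[OF \<open>0 < \<delta>1\<close>, of s] by (elim exE conjE) (rule that)
  show ?thesis
  proof (intro exI[of _ "max N1 (max N2 (nat \<lceil>s / \<delta>2\<rceil>))"] allI impI)
    fix X :: "'a set" and Y :: "'b set" and Z :: "'c set" and Q
    assume X: "finite X" and Y: "finite Y" and Z: "finite Z"
      and large: "max N1 (max N2 (nat \<lceil>s / \<delta>2\<rceil>)) \<le> card X"
        "max N1 (max N2 (nat \<lceil>s / \<delta>2\<rceil>)) \<le> card Y" "max N1 (max N2 (nat \<lceil>s / \<delta>2\<rceil>)) \<le> card Z"
      and dense: "\<delta> * card X * card Y * card Z \<le> card {(x, y, z). x \<in> X \<and> y \<in> Y \<and> z \<in> Z \<and> Q x y z}"
    define R where "R = {(x, y, z). x \<in> X \<and> y \<in> Y \<and> z \<in> Z \<and> Q x y z}"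
    have "N1 \<le> card X" using large(1) by simp
    moreover have "R \<subseteq> X \<times> (Y \<times> Z)" by (auto simp: R_def)
    moreover have "\<delta> * card X * card (Y \<times> Z) \<le> card R"
      using dense by (simp add: R_def card_cartesian_product mult_ac)
    ultimately obtain S where S: "S \<subseteq> X" "card S = s"
      and "\<delta>1 * card (Y \<times> Z) \<le> card {p\<in>Y \<times> Z. \<forall>x\<in>S. (x, p) \<in> R}"
      using K1[rule_format, OF X finite_SigmaI[OF Y Z]] by blast
    define C where "C = {p\<in>Y \<times> Z. \<forall>x\<in>S. (x, p) \<in> R}"
    have "N2 \<le> card Y" using large(2) by simp
    moreover have "C \<subseteq> Y \<times> Z" by (auto simp: C_def)
    moreover have "\<delta>1 * card Y * card Z \<le> card C"
      using \<open>\<delta>1 * card (Y \<times> Z) \<le> _\<close> by (simp add: C_def card_cartesian_product mult_ac)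
    ultimately obtain T where T: "T \<subseteq> Y" "card T = s"
      and T_common: "\<delta>2 * card Z \<le> card {z\<in>Z. \<forall>y\<in>T. (y, z) \<in> C}"
      using K2[rule_format, OF Y Z] by blast
    have "s / \<delta>2 \<le> card Z" using large(3) by linarith
    then have "real s \<le> \<delta>2 * card Z" using \<open>0 < \<delta>2\<close> by (simp add: divide_le_eq mult.commute)
    then have "s \<le> card {z\<in>Z. \<forall>y\<in>T. (y, z) \<in> C}" using T_common by linarith
    then obtain W where W: "W \<subseteq> {z\<in>Z. \<forall>y\<in>T. (y, z) \<in> C}" "card W = s"
      by (meson obtain_subset_with_card_n)
    have "Q x y z" if "x \<in> S" "y \<in> T" "z \<in> W" for x y z
    proof -
      have "(y, z) \<in> C" using W that by blast
      then have "(x, y, z) \<in> R" using \<open>x \<in> S\<close> unfolding C_def by blast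
      then show ?thesis unfolding R_def by simp
    qed
    then show "\<exists>S\<subseteq>X. \<exists>T\<subseteq>Y. \<exists>W\<subseteq>Z. card S = s \<and> card T = s \<and> card W = s \<and>
        (\<forall>x\<in>S. \<forall>y\<in>T. \<forall>z\<in>W. Q x y z)"
      using S T W by (intro exI[of _ S] exI[of _ T] exI[of _ W] conjI) auto
  qed
qed

definition contains_complete_box :: "'a set set \<Rightarrow> nat \<Rightarrow> 'a set \<Rightarrow> 'a set \<Rightarrow> 'a set \<Rightarrow> bool" where
  "contains_complete_box H s R1 R2 R3 \<longleftrightarrow>
     (\<exists>S1\<subseteq>R1. \<exists>S2\<subseteq>R2. \<exists>S3\<subseteq>R3. card S1 = s \<and> card S2 = s \<and> card S3 = s \<and>
        (\<forall>x\<in>S1. \<forall>y\<in>S2. \<forall>z\<in>S3. {x, y, z} \<in> H))"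

lemma card_edge_triples_ge_density:
  fixes \<delta> :: real
  assumes "finite A1" "finite A2" "finite A3" "\<delta> \<le> density H A1 A2 A3"
  shows "\<delta> * card A1 * card A2 * card A3 \<le> card {(x, y, z). x \<in> A1 \<and> y \<in> A2 \<and> z \<in> A3 \<and> {x, y, z} \<in> H}"
proof -
  define T where "T = {(x, y, z). x \<in> A1 \<and> y \<in> A2 \<and> z \<in> A3 \<and> {x, y, z} \<in> H}"
  have "finite T"
    by (rule finite_subset[of _ "A1 \<times> A2 \<times> A3"]) (use assms in \<open>auto simp: T_def\<close>)
  have "{e\<in>H. \<exists>x\<in>A1. \<exists>y\<in>A2. \<exists>z\<in>A3. e = {x, y, z}} \<subseteq> (\<lambda>(x, y, z). {x, y, z}) ` T"
    by (auto simp: T_def image_iff)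
  then have "cross_edges H A1 A2 A3 \<le> card ((\<lambda>(x, y, z). {x, y, z}) ` T)"
    unfolding cross_edges_def using \<open>finite T\<close> by (intro card_mono) auto
  also have "\<dots> \<le> card T" using \<open>finite T\<close> by (rule card_image_le)
  finally have edges_le: "real (cross_edges H A1 A2 A3) \<le> card T" by simp
  show ?thesis
  proof (cases "card A1 * card A2 * card A3 = 0")
    case True
    then have "\<delta> \<le> 0" using assms(4) by (auto simp: density_def)
    then have "\<delta> * (card A1 * card A2 * card A3) \<le> 0" by (simp add: mult_nonpos_nonneg)
    then show ?thesis using of_nat_0_le_iff[of "card T"] by (simp add: T_def mult.assoc)
  next
    case False
    then have "\<delta> * (card A1 * card A2 * card A3) \<le> cross_edges H A1 A2 A3"
      using assms(4) by (simp add: density_def le_divide_eq)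
    then show ?thesis using edges_le by (simp add: T_def mult_ac)
  qed
qed

lemma regular_triple_contains_complete_box:
  fixes \<epsilon> :: real
  assumes "0 < \<epsilon>"
  obtains N where "\<And>(H :: 'a set set) d V1 V2 V3 R1 R2 R3.
    eps_d_regular H \<epsilon> d V1 V2 V3 \<Longrightarrow> 2 * \<epsilon> \<le> d \<Longrightarrow>
    R1 \<subseteq> V1 \<Longrightarrow> R2 \<subseteq> V2 \<Longrightarrow> R3 \<subseteq> V3 \<Longrightarrow>
    \<epsilon> * card V1 \<le> card R1 \<Longrightarrow> \<epsilon> * card V2 \<le> card R2 \<Longrightarrow> \<epsilon> * card V3 \<le> card R3 \<Longrightarrow>
    N \<le> card R1 \<Longrightarrow> N \<le> card R2 \<Longrightarrow> N \<le> card R3 \<Longrightarrow>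
    contains_complete_box H s R1 R2 R3"
proof -
  obtain N0 where N0: "\<forall>(X :: 'a set) (Y :: 'a set) (Z :: 'a set) Q.
     finite X \<longrightarrow> finite Y \<longrightarrow> finite Z \<longrightarrow> N0 \<le> card X \<longrightarrow> N0 \<le> card Y \<longrightarrow> N0 \<le> card Z \<longrightarrow>
     \<epsilon> * card X * card Y * card Z \<le> card {(x, y, z). x \<in> X \<and> y \<in> Y \<and> z \<in> Z \<and> Q x y z} \<longrightarrow>
     (\<exists>S\<subseteq>X. \<exists>T\<subseteq>Y. \<exists>W\<subseteq>Z. card S = s \<and> card T = s \<and> card W = s \<and>
        (\<forall>x\<in>S. \<forall>y\<in>T. \<forall>z\<in>W. Q x y z))"
    using dense_triple_relation_contains_box[OF assms, of s] by (elim exE) (rule that)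
  show thesis
  proof (rule that[of "max N0 1"])
    fix H :: "'a set set" and d V1 V2 V3 R1 R2 R3
    assume reg: "eps_d_regular H \<epsilon> d V1 V2 V3" and "2 * \<epsilon> \<le> d"
      and R: "R1 \<subseteq> V1" "R2 \<subseteq> V2" "R3 \<subseteq> V3"
      and eps: "\<epsilon> * card V1 \<le> card R1" "\<epsilon> * card V2 \<le> card R2" "\<epsilon> * card V3 \<le> card R3"
      and large: "max N0 1 \<le> card R1" "max N0 1 \<le> card R2" "max N0 1 \<le> card R3"
    have fin: "finite R1" "finite R2" "finite R3"
      using large by (auto intro: card_ge_0_finite)
    have "\<bar>density H R1 R2 R3 - d\<bar> \<le> \<epsilon>"
      using R eps by (intro reg[unfolded eps_d_regular_def, rule_format]) auto
    then have "\<epsilon> \<le> density H R1 R2 R3" using \<open>2 * \<epsilon> \<le> d\<close> by linarith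
    then have "\<epsilon> * card R1 * card R2 * card R3 \<le>
        card {(x, y, z). x \<in> R1 \<and> y \<in> R2 \<and> z \<in> R3 \<and> {x, y, z} \<in> H}"
      by (rule card_edge_triples_ge_density[OF fin])
    moreover have "N0 \<le> card R1" "N0 \<le> card R2" "N0 \<le> card R3" using large by auto
    ultimately show "contains_complete_box H s R1 R2 R3"
      unfolding contains_complete_box_def using N0 fin by simp
  qed
qed

definition triple_perms :: "'b \<Rightarrow> 'b \<Rightarrow> 'b \<Rightarrow> ('b \<times> 'b \<times> 'b) set" where
  "triple_perms a b c = {(a, b, c), (a, c, b), (b, a, c), (b, c, a), (c, a, b), (c, b, a)}"

lemma Kabc_copy_of_complete_triple:
  assumes disj: "T1 \<inter> T2 = {}" "T1 \<inter> T3 = {}" "T2 \<inter> T3 = {}"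
    and fin: "finite T1" "finite T2" "finite T3" and sub: "T1 \<union> T2 \<union> T3 \<subseteq> U"
    and complete: "\<forall>x\<in>T1. \<forall>y\<in>T2. \<forall>z\<in>T3. {x, y, z} \<in> H"
    and sizes: "(card T1, card T2, card T3) \<in> triple_perms a b c"
  shows "\<exists>Y. is_Kabc_copy H U a b c Y \<and> copy_verts Y = T1 \<union> T2 \<union> T3"
proof -
  have edges: "{x, y, z} \<in> H" "{x, z, y} \<in> H" "{y, x, z} \<in> H" "{y, z, x} \<in> H" "{z, x, y} \<in> H" "{z, y, x} \<in> H"
    if "x \<in> T1" "y \<in> T2" "z \<in> T3" for x y z
    using complete that by (auto simp: insert_commute)
  from sizes consider
      "card T1 = a" "card T2 = b" "card T3 = c" | "card T1 = a" "card T2 = c" "card T3 = b"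
    | "card T1 = b" "card T2 = a" "card T3 = c" | "card T1 = b" "card T2 = c" "card T3 = a"
    | "card T1 = c" "card T2 = a" "card T3 = b" | "card T1 = c" "card T2 = b" "card T3 = a"
    unfolding triple_perms_def by auto
  then show ?thesis
  proof cases
    case 1 then show ?thesis using assms edges
      by (intro exI[of _ "(T1, T2, T3)"]) (auto simp: is_Kabc_copy_def copy_verts_def)
  next
    case 2 then show ?thesis using assms edges
      by (intro exI[of _ "(T1, T3, T2)"]) (auto simp: is_Kabc_copy_def copy_verts_def)
  next
    case 3 then show ?thesis using assms edges
      by (intro exI[of _ "(T2, T1, T3)"]) (auto simp: is_Kabc_copy_def copy_verts_def)
  next
    case 4 then show ?thesis using assms edges
      by (intro exI[of _ "(T3, T1, T2)"]) (auto simp: is_Kabc_copy_def copy_verts_def)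
  next
    case 5 then show ?thesis using assms edges
      by (intro exI[of _ "(T2, T3, T1)"]) (auto simp: is_Kabc_copy_def copy_verts_def)
  next
    case 6 then show ?thesis using assms edges
      by (intro exI[of _ "(T3, T2, T1)"]) (auto simp: is_Kabc_copy_def copy_verts_def)
  qed
qed

lemma Kabc_copy_in_complete_box:
  assumes disj: "R1 \<inter> R2 = {}" "R1 \<inter> R3 = {}" "R2 \<inter> R3 = {}" and sub: "R1 \<union> R2 \<union> R3 \<subseteq> U"
    and box: "contains_complete_box H c R1 R2 R3"
    and k: "(k1, k2, k3) \<in> triple_perms a b c" and "a \<le> c" "b \<le> c"
  obtains T1 T2 T3 Y where "T1 \<subseteq> R1" "T2 \<subseteq> R2" "T3 \<subseteq> R3" "finite T1" "finite T2" "finite T3"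
    "card T1 = k1" "card T2 = k2" "card T3 = k3"
    "is_Kabc_copy H U a b c Y" "copy_verts Y = T1 \<union> T2 \<union> T3"
proof -
  obtain S1 S2 S3 where S: "S1 \<subseteq> R1" "S2 \<subseteq> R2" "S3 \<subseteq> R3" "card S1 = c" "card S2 = c" "card S3 = c"
    and complete: "\<forall>x\<in>S1. \<forall>y\<in>S2. \<forall>z\<in>S3. {x, y, z} \<in> H"
    using box unfolding contains_complete_box_def by blast
  have "k1 \<le> c" "k2 \<le> c" "k3 \<le> c" using k \<open>a \<le> c\<close> \<open>b \<le> c\<close> by (auto simp: triple_perms_def)
  obtain T1 where "T1 \<subseteq> S1" "card T1 = k1" "finite T1"
    using obtain_subset_with_card_n[of k1 S1] S(4) \<open>k1 \<le> c\<close> by auto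
  moreover obtain T2 where "T2 \<subseteq> S2" "card T2 = k2" "finite T2"
    using obtain_subset_with_card_n[of k2 S2] S(5) \<open>k2 \<le> c\<close> by auto
  moreover obtain T3 where "T3 \<subseteq> S3" "card T3 = k3" "finite T3"
    using obtain_subset_with_card_n[of k3 S3] S(6) \<open>k3 \<le> c\<close> by auto
  ultimately have T: "T1 \<subseteq> S1" "T2 \<subseteq> S2" "T3 \<subseteq> S3" and card_T: "card T1 = k1" "card T2 = k2" "card T3 = k3"
    and finT: "finite T1" "finite T2" "finite T3" by blast+
  have "T1 \<inter> T2 = {}" "T1 \<inter> T3 = {}" "T2 \<inter> T3 = {}" "T1 \<union> T2 \<union> T3 \<subseteq> U"
    using T S disj sub by blast+
  moreover have "\<forall>x\<in>T1. \<forall>y\<in>T2. \<forall>z\<in>T3. {x, y, z} \<in> H" using T complete by blast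
  moreover have "(card T1, card T2, card T3) \<in> triple_perms a b c" using k card_T by simp
  ultimately obtain Y where "is_Kabc_copy H U a b c Y" "copy_verts Y = T1 \<union> T2 \<union> T3"
    using Kabc_copy_of_complete_triple[OF _ _ _ finT] by blast
  then show thesis using that[OF _ _ _ finT card_T] T S by blast
qed

lemma card_Un3_le: "card (A \<union> B \<union> C) \<le> card A + card B + card C"
  using card_Un_le[of "A \<union> B" C] card_Un_le[of A B] by linarith

lemma greedy_Kabc_tiling:
  fixes \<beta> :: real and P :: "nat \<Rightarrow> nat \<Rightarrow> nat \<Rightarrow> bool"
  assumes disj: "V1 \<inter> V2 = {}" "V1 \<inter> V3 = {}" "V2 \<inter> V3 = {}"
    and fin: "finite V1" "finite V2" "finite V3"
    and "a \<le> c" "b \<le> c" "0 < c"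
    and step: "\<And>R1 R2 R3. R1 \<subseteq> V1 \<Longrightarrow> R2 \<subseteq> V2 \<Longrightarrow> R3 \<subseteq> V3 \<Longrightarrow> P (card R1) (card R2) (card R3) \<Longrightarrow>
       real (card R1 + card R2 + card R3) \<le> \<beta> \<or>
       (contains_complete_box H c R1 R2 R3 \<and>
        (\<exists>(k1, k2, k3)\<in>triple_perms a b c. P (card R1 - k1) (card R2 - k2) (card R3 - k3)))"
  shows "R1 \<subseteq> V1 \<Longrightarrow> R2 \<subseteq> V2 \<Longrightarrow> R3 \<subseteq> V3 \<Longrightarrow> P (card R1) (card R2) (card R3) \<Longrightarrow>
    \<exists>\<T>. is_Kabc_tiling H (V1 \<union> V2 \<union> V3) a b c \<T> \<and> (\<Union>Y\<in>\<T>. copy_verts Y) \<subseteq> R1 \<union> R2 \<union> R3 \<and>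
      real (card ((R1 \<union> R2 \<union> R3) - (\<Union>Y\<in>\<T>. copy_verts Y))) \<le> \<beta>"
proof (induction "card R1 + card R2 + card R3" arbitrary: R1 R2 R3 rule: less_induct)
  case less
  have finR: "finite R1" "finite R2" "finite R3" using less.prems fin finite_subset by blast+
  consider "real (card R1 + card R2 + card R3) \<le> \<beta>"
    | "contains_complete_box H c R1 R2 R3" and
      "\<exists>(k1, k2, k3)\<in>triple_perms a b c. P (card R1 - k1) (card R2 - k2) (card R3 - k3)"
    using step[OF less.prems] by blast
  then show ?case
  proof cases
    case 1
    then show ?thesis
      using card_Un3_le[of R1 R2 R3] by (intro exI[of _ "{}"]) (auto simp: is_Kabc_tiling_def)
  next
    case 2
    then obtain k1 k2 k3 where k: "(k1, k2, k3) \<in> triple_perms a b c"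
      and P_next: "P (card R1 - k1) (card R2 - k2) (card R3 - k3)" by blast
    have "R1 \<inter> R2 = {}" "R1 \<inter> R3 = {}" "R2 \<inter> R3 = {}" "R1 \<union> R2 \<union> R3 \<subseteq> V1 \<union> V2 \<union> V3"
      using less.prems disj by auto
    then obtain T1 T2 T3 Y where TR: "T1 \<subseteq> R1" "T2 \<subseteq> R2" "T3 \<subseteq> R3"
      and finT: "finite T1" "finite T2" "finite T3" and card_T: "card T1 = k1" "card T2 = k2" "card T3 = k3"
      and Y: "is_Kabc_copy H (V1 \<union> V2 \<union> V3) a b c Y" "copy_verts Y = T1 \<union> T2 \<union> T3"
      by (rule Kabc_copy_in_complete_box[OF _ _ _ _ 2(1) k \<open>a \<le> c\<close> \<open>b \<le> c\<close>])
    have "0 < k1 + k2 + k3" using k \<open>0 < c\<close> by (auto simp: triple_perms_def)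
    define R1' R2' R3' where "R1' = R1 - T1" and "R2' = R2 - T2" and "R3' = R3 - T3"
    have card_R': "card R1' = card R1 - k1" "card R2' = card R2 - k2" "card R3' = card R3 - k3"
      using TR finT card_T by (simp_all add: R1'_def R2'_def R3'_def card_Diff_subset)
    have "card T1 \<le> card R1" "card T2 \<le> card R2" "card T3 \<le> card R3"
      using TR finR by (simp_all add: card_mono)
    then have "card R1' + card R2' + card R3' < card R1 + card R2 + card R3"
      using card_R' card_T \<open>0 < k1 + k2 + k3\<close> by linarith
    moreover have "R1' \<subseteq> V1" "R2' \<subseteq> V2" "R3' \<subseteq> V3" using less.prems by (auto simp: R1'_def R2'_def R3'_def)
    ultimately obtain \<T>' where \<T>': "is_Kabc_tiling H (V1 \<union> V2 \<union> V3) a b c \<T>'"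
      "(\<Union>Y\<in>\<T>'. copy_verts Y) \<subseteq> R1' \<union> R2' \<union> R3'"
      "real (card ((R1' \<union> R2' \<union> R3') - (\<Union>Y\<in>\<T>'. copy_verts Y))) \<le> \<beta>"
      using less.hyps P_next card_R' by metis
    \<comment> \<open>the parts lie in different V_i, so removing T_i from R_i removes all of copy_verts Y\<close>
    have R'_eq: "R1' \<union> R2' \<union> R3' = (R1 \<union> R2 \<union> R3) - copy_verts Y"
      unfolding Y(2) R1'_def R2'_def R3'_def using TR less.prems disj by blast
    have "is_Kabc_tiling H (V1 \<union> V2 \<union> V3) a b c (insert Y \<T>')"
      using \<T>'(1,2) Y(1) unfolding is_Kabc_tiling_def R'_eq by blast
    moreover have "(\<Union>Z\<in>insert Y \<T>'. copy_verts Z) \<subseteq> R1 \<union> R2 \<union> R3"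
      using \<T>'(2) Y(2) TR unfolding R'_eq by auto
    moreover have "(R1 \<union> R2 \<union> R3) - (\<Union>Z\<in>insert Y \<T>'. copy_verts Z) = (R1' \<union> R2' \<union> R3') - (\<Union>Y\<in>\<T>'. copy_verts Y)"
      unfolding R'_eq by auto
    ultimately show ?thesis using \<T>'(3) by metis
  qed
qed

text \<open>Used with (A, B, C) = (a, b, c) and s_i = |R_i| - \<epsilon>|V_i| for the uncovered parts R_i.\<close>

definition balanced_excess :: "real \<Rightarrow> real \<Rightarrow> real \<Rightarrow> real \<Rightarrow> real \<Rightarrow> real \<Rightarrow> bool" where
  "balanced_excess A B C s1 s2 s3 \<longleftrightarrow>
     -2 * C \<le> s2 - s1 \<and> -2 * C \<le> s3 - s2 \<and> -2 * C \<le> B * s1 - A * s2 \<and> -2 * C \<le> C * s2 - B * s3"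

lemma balanced_excess_diff:
  "balanced_excess A B C (s1 - k1) (s2 - k2) (s3 - k3) \<longleftrightarrow>
     -2 * C \<le> (s2 - s1) - (k2 - k1) \<and> -2 * C \<le> (s3 - s2) - (k3 - k2) \<and>
     -2 * C \<le> (B * s1 - A * s2) - (B * k1 - A * k2) \<and> -2 * C \<le> (C * s2 - B * s3) - (C * k2 - B * k3)"
  by (simp add: balanced_excess_def algebra_simps)

context
  fixes A B C s1 s2 s3 :: real
  assumes order: "1 \<le> A" "A \<le> B" "B \<le> C"
    and integral_gaps: "A = B \<or> A + 1 \<le> B" "B = C \<or> B + 1 \<le> C"
    and balanced: "balanced_excess A B C s1 s2 s3"
    and large: "4 * C\<^sup>2 \<le> s1" "4 * C\<^sup>2 \<le> s2" "4 * C\<^sup>2 \<le> s3"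
begin

lemma balanced_excess_ineqs:
  "-2 * C \<le> s2 - s1" "-2 * C \<le> s3 - s2" "-2 * C \<le> B * s1 - A * s2" "-2 * C \<le> C * s2 - B * s3"
  using balanced by (simp_all add: balanced_excess_def)

lemma order_products:
  "A * C \<le> C * C" "B * C \<le> C * C" "B * B \<le> C * C" "A * B \<le> C * C" "0 \<le> A * A" "0 \<le> B * B"
  "A * A \<le> A * B" "A * B \<le> B * B" "A * C \<le> B * C" "A * B \<le> A * C" "0 \<le> C"
  "B * A = A * B" "C * A = A * C" "C * B = B * C"
  using order by (auto intro: mult_mono)

lemmas step_facts = balanced_excess_ineqs order_products order

lemma excesses_large: "4 * (C * C) \<le> s1" "4 * (C * C) \<le> s2" "0 \<le> s1" "0 \<le> s2"
proof -
  show "4 * (C * C) \<le> s1" "4 * (C * C) \<le> s2" using large by (simp_all add: power2_eq_square)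
  then show "0 \<le> s1" "0 \<le> s2" using zero_le_square[of C] by linarith+
qed

text \<open>A gap between consecutive part sizes makes the corresponding ratio constraint slack.\<close>

lemma ratio_slack_12:
  assumes "A + 1 \<le> B" "s2 - s1 < C"
  shows "3 * (C * C) \<le> B * s1 - A * s2"
proof -
  have "0 \<le> (B - A - 1) * s1" using assms excesses_large by simp
  moreover have "A * (s2 - s1) \<le> A * C" using assms order by (intro mult_left_mono) auto
  ultimately show ?thesis using excesses_large order_products by (simp add: algebra_simps)
qed

lemma ratio_slack_23:
  assumes "B + 1 \<le> C" "s3 - s2 < C"
  shows "3 * (C * C) \<le> C * s2 - B * s3"
proof -
  have "0 \<le> (C - B - 1) * s2" using assms excesses_large by simp
  moreover have "B * (s3 - s2) \<le> B * C" using assms order by (intro mult_left_mono) auto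
  ultimately show ?thesis using excesses_large order_products by (simp add: algebra_simps)
qed

lemma balanced_excess_step_if_gap_12:
  assumes "C \<le> s2 - s1"
  shows "\<exists>(k1, k2, k3)\<in>triple_perms A B C. balanced_excess A B C (s1 - k1) (s2 - k2) (s3 - k3)"
proof (cases "C \<le> s3 - s2")
  case True
  then have "balanced_excess A B C (s1 - A) (s2 - B) (s3 - C)"
    using assms step_facts unfolding balanced_excess_diff by (intro conjI; linarith)
  then show ?thesis by (intro bexI[of _ "(A, B, C)"]) (simp_all add: triple_perms_def)
next
  case False
  have "-2 * C \<le> (C * s2 - B * s3) - (C * C - B * B)"
    using integral_gaps(2)
  proof (elim disjE)
    assume "B + 1 \<le> C"
    then have "3 * (C * C) \<le> C * s2 - B * s3" using False by (intro ratio_slack_23) auto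
    then show ?thesis using order_products by linarith
  qed (use balanced_excess_ineqs in simp)
  then have "balanced_excess A B C (s1 - A) (s2 - C) (s3 - B)"
    using assms False step_facts unfolding balanced_excess_diff by (intro conjI; linarith)
  then show ?thesis by (intro bexI[of _ "(A, C, B)"]) (simp_all add: triple_perms_def)
qed

lemma balanced_excess_step_if_gap_23:
  assumes "s2 - s1 < C" "C \<le> s3 - s2"
  shows "\<exists>(k1, k2, k3)\<in>triple_perms A B C. balanced_excess A B C (s1 - k1) (s2 - k2) (s3 - k3)"
proof -
  have "-2 * C \<le> (B * s1 - A * s2) - (B * B - A * A)"
    using integral_gaps(1)
  proof (elim disjE)
    assume "A + 1 \<le> B"
    then have "3 * (C * C) \<le> B * s1 - A * s2" using assms by (intro ratio_slack_12)
    then show ?thesis using order_products by linarith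
  qed (use balanced_excess_ineqs in simp)
  then have "balanced_excess A B C (s1 - B) (s2 - A) (s3 - C)"
    using assms step_facts unfolding balanced_excess_diff by (intro conjI; linarith)
  then show ?thesis by (intro bexI[of _ "(B, A, C)"]) (simp_all add: triple_perms_def)
qed

lemma balanced_excess_step_if_no_gap_AB_equal:
  assumes gaps: "s2 - s1 < C" "s3 - s2 < C" and "A = B" "B + 1 \<le> C"
  shows "\<exists>(k1, k2, k3)\<in>triple_perms A B C. balanced_excess A B C (s1 - k1) (s2 - k2) (s3 - k3)"
proof -
  have eq: "A * A = B * B" "A * B = B * B" "A * C = B * C" "B * s1 = A * s1" using \<open>A = B\<close> by simp_all
  note facts = assms eq step_facts ratio_slack_23[OF \<open>B + 1 \<le> C\<close> gaps(2)]
  show ?thesis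
  proof (cases "-C \<le> s2 - s1")
    case True
    then have "balanced_excess A B C (s1 - A) (s2 - C) (s3 - B)"
      using facts unfolding balanced_excess_diff by (intro conjI; linarith)
    then show ?thesis by (intro bexI[of _ "(A, C, B)"]) (simp_all add: triple_perms_def)
  next
    case False
    then have "A * (s2 - s1 + C - A) \<le> A * (- A)" using order by (intro mult_left_mono) auto
    then have "A * s2 - A * s1 + A * C \<le> 0" by (simp add: algebra_simps)
    then have "balanced_excess A B C (s1 - C) (s2 - A) (s3 - B)"
      using facts unfolding balanced_excess_diff by (intro conjI; linarith)
    then show ?thesis by (intro bexI[of _ "(C, A, B)"]) (simp_all add: triple_perms_def)
  qed
qed

lemma balanced_excess_step_if_no_gap_BC_equal:
  assumes gaps: "s2 - s1 < C" "s3 - s2 < C" and "A + 1 \<le> B" "B = C"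
  shows "\<exists>(k1, k2, k3)\<in>triple_perms A B C. balanced_excess A B C (s1 - k1) (s2 - k2) (s3 - k3)"
proof -
  have eq: "C * C = B * B" "B * C = B * B" "A * C = A * B" "C * s2 = B * s2" using \<open>B = C\<close> by simp_all
  note facts = assms eq step_facts ratio_slack_12[OF \<open>A + 1 \<le> B\<close> gaps(1)]
  show ?thesis
  proof (cases "-2 * C + (B - A) \<le> s3 - s2")
    case True
    then have "balanced_excess A B C (s1 - B) (s2 - A) (s3 - C)"
      using facts unfolding balanced_excess_diff by (intro conjI; linarith)
    then show ?thesis by (intro bexI[of _ "(B, A, C)"]) (simp_all add: triple_perms_def)
  next
    case False
    then have "B * (s3 - s2 + B - A) \<le> B * 0" using assms order by (intro mult_left_mono) auto
    then have "B * s3 - B * s2 + B * B - A * B \<le> 0" by (simp add: algebra_simps)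
    then have "balanced_excess A B C (s1 - B) (s2 - C) (s3 - A)"
      using facts unfolding balanced_excess_diff by (intro conjI; linarith)
    then show ?thesis by (intro bexI[of _ "(B, C, A)"]) (simp_all add: triple_perms_def)
  qed
qed

lemma balanced_excess_step_if_no_gap:
  assumes gaps: "s2 - s1 < C" "s3 - s2 < C"
  shows "\<exists>(k1, k2, k3)\<in>triple_perms A B C. balanced_excess A B C (s1 - k1) (s2 - k2) (s3 - k3)"
proof -
  consider "A = B" "B = C" | "A + 1 \<le> B" "B + 1 \<le> C" | "A = B" "B + 1 \<le> C" | "A + 1 \<le> B" "B = C"
    using integral_gaps by blast
  then show ?thesis
  proof cases
    case 1
    then have "balanced_excess A B C (s1 - A) (s2 - B) (s3 - C)"
      using balanced_excess_ineqs unfolding balanced_excess_diff by simp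
    then show ?thesis by (intro bexI[of _ "(A, B, C)"]) (simp_all add: triple_perms_def)
  next
    case 2
    then have "balanced_excess A B C (s1 - C) (s2 - B) (s3 - A)"
      using gaps step_facts ratio_slack_12[OF 2(1) gaps(1)] ratio_slack_23[OF 2(2) gaps(2)]
      unfolding balanced_excess_diff by (intro conjI; linarith)
    then show ?thesis by (intro bexI[of _ "(C, B, A)"]) (simp_all add: triple_perms_def)
  next
    case 3
    then show ?thesis by (rule balanced_excess_step_if_no_gap_AB_equal[OF gaps])
  next
    case 4
    then show ?thesis by (rule balanced_excess_step_if_no_gap_BC_equal[OF gaps])
  qed
qed

lemma balanced_excess_step_real:
  "\<exists>(k1, k2, k3)\<in>triple_perms A B C. balanced_excess A B C (s1 - k1) (s2 - k2) (s3 - k3)"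
  using balanced_excess_step_if_gap_12 balanced_excess_step_if_gap_23
    balanced_excess_step_if_no_gap by fastforce

end

lemma balanced_excess_step:
  fixes a b c :: nat and s1 s2 s3 :: real
  assumes "0 < a" "a \<le> b" "b \<le> c" and "balanced_excess a b c s1 s2 s3"
    and "4 * real c ^ 2 \<le> s1" "4 * real c ^ 2 \<le> s2" "4 * real c ^ 2 \<le> s3"
  shows "\<exists>(k1, k2, k3)\<in>triple_perms a b c.
           balanced_excess a b c (s1 - real k1) (s2 - real k2) (s3 - real k3)"
proof -
  have "1 \<le> real a" "real a \<le> b" "real b \<le> c" using assms(1-3) by simp_all
  moreover have "real a = b \<or> real a + 1 \<le> b" "real b = c \<or> real b + 1 \<le> c" using assms(2,3) by auto
  ultimately obtain k1 k2 k3 where "(k1, k2, k3) \<in> triple_perms (real a) (real b) (real c)"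
    "balanced_excess a b c (s1 - k1) (s2 - k2) (s3 - k3)"
    using balanced_excess_step_real assms(4-7) by blast
  then show ?thesis unfolding triple_perms_def by auto
qed

lemma le_of_scaled_le:
  fixes A s Y :: real
  assumes "1 \<le> A" "A * s \<le> Y" "0 \<le> Y"
  shows "s \<le> Y"
proof (cases "s \<le> 0")
  case False
  then have "s \<le> A * s" using assms(1) mult_right_mono[of 1 A s] by simp
  then show ?thesis using assms(2) by linarith
qed (use assms in linarith)

lemma balanced_excess_sum_bound:
  fixes a b c :: nat and s1 s2 s3 :: real
  assumes "0 < a" "a \<le> b" "b \<le> c" and bal: "balanced_excess a b c s1 s2 s3"
    and small: "s1 < 4 * real c ^ 2 \<or> s2 < 4 * real c ^ 2 \<or> s3 < 4 * real c ^ 2"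
  shows "s1 + s2 + s3 \<le> 24 * real c ^ 4"
proof -
  define A B C where "A = real a" and "B = real b" and "C = real c"
  define L K where "L = 4 * C\<^sup>2" and "K = 2 * C"
  have order: "1 \<le> A" "A \<le> B" "B \<le> C" using assms(1-3) by (simp_all add: A_def B_def C_def)
  then have "0 \<le> L" "0 \<le> K" by (simp_all add: L_def K_def)
  have I: "s1 \<le> s2 + K" "s2 \<le> s3 + K" "A * s2 \<le> B * s1 + K" "B * s3 \<le> C * s2 + K"
    using bal by (simp_all add: balanced_excess_def A_def B_def C_def K_def)
  \<comment> \<open>an upper bound on one excess propagates to the next one through the ratio constraints\<close>
  have up12: "s2 \<le> C * X + K" if "s1 \<le> X" "0 \<le> X" for X
  proof (rule le_of_scaled_le[OF order(1)])
    have "B * s1 \<le> B * X" using that order by (intro mult_left_mono) auto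
    also have "\<dots> \<le> C * X" using that order by (intro mult_right_mono) auto
    finally show "A * s2 \<le> C * X + K" using I(3) by linarith
    show "0 \<le> C * X + K" using that order \<open>0 \<le> K\<close> by simp
  qed
  have up23: "s3 \<le> C * X + K" if "s2 \<le> X" "0 \<le> X" for X
  proof (rule le_of_scaled_le[of B])
    have "C * s2 \<le> C * X" using that order by (intro mult_left_mono) auto
    then show "B * s3 \<le> C * X + K" using I(4) by linarith
    show "1 \<le> B" "0 \<le> C * X + K" using that order \<open>0 \<le> K\<close> by simp_all
  qed
  define M where "M = C * (C * L + K) + K"
  have "L \<le> C * L" "K \<le> C * K" "C * L \<le> C * (C * L)"
    using order \<open>0 \<le> L\<close> \<open>0 \<le> K\<close> mult_right_mono[of 1 C] by (auto intro: mult_left_mono)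
  then have M_ge: "L + 2 * K \<le> M" "C * L + K \<le> M" "0 \<le> C * L"
    using \<open>0 \<le> L\<close> \<open>0 \<le> K\<close> by (simp_all add: M_def algebra_simps)
  have "s1 < L \<or> s2 < L \<or> s3 < L" using small by (simp add: L_def C_def)
  then have "s1 \<le> M \<and> s2 \<le> M \<and> s3 \<le> M"
  proof (elim disjE)
    assume "s1 < L"
    then show ?thesis using up12[of L] up23[of "C * L + K"] \<open>0 \<le> L\<close> \<open>0 \<le> K\<close> M_ge by (simp add: M_def)
  next
    assume "s2 < L"
    moreover have "s3 \<le> C * L + K" using up23[of L] \<open>0 \<le> L\<close> calculation by simp
    ultimately show ?thesis using I(1) \<open>0 \<le> K\<close> M_ge by (intro conjI; linarith)
  next
    assume "s3 < L"
    then show ?thesis using I(1,2) \<open>0 \<le> K\<close> M_ge by (intro conjI; linarith)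
  qed
  moreover have "M \<le> 8 * C ^ 4"
  proof -
    have "1 \<le> C" using order by linarith
    then have "C ^ 1 \<le> C ^ 4" "C ^ 2 \<le> C ^ 4" by (simp_all only: power_increasing)
    then show ?thesis by (simp add: M_def L_def K_def power2_eq_square power4_eq_xxxx algebra_simps)
  qed
  ultimately show ?thesis by (simp add: C_def)
qed

context
  fixes H :: "'a set set" and V1 V2 V3 :: "'a set" and a b c N :: nat and \<epsilon> :: real
  assumes abc: "0 < a" "a \<le> b" "b \<le> c" and eps: "0 < \<epsilon>" "\<epsilon> < 1"
    and fin: "finite V1" "finite V2" "finite V3"
    and disj: "V1 \<inter> V2 = {}" "V1 \<inter> V3 = {}" "V2 \<inter> V3 = {}"
    and sizes: "card V1 \<le> card V2" "card V2 \<le> card V3"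
    and ratios: "real (card V2) / b \<le> real (card V1) / a" "real (card V3) / c \<le> real (card V2) / b"
    and box: "\<And>R1 R2 R3. R1 \<subseteq> V1 \<Longrightarrow> R2 \<subseteq> V2 \<Longrightarrow> R3 \<subseteq> V3 \<Longrightarrow>
      \<epsilon> * card V1 \<le> card R1 \<Longrightarrow> \<epsilon> * card V2 \<le> card R2 \<Longrightarrow> \<epsilon> * card V3 \<le> card R3 \<Longrightarrow>
      N \<le> card R1 \<Longrightarrow> N \<le> card R2 \<Longrightarrow> N \<le> card R3 \<Longrightarrow> contains_complete_box H c R1 R2 R3"
    and large: "real N + 24 * real c ^ 4 \<le> \<epsilon> * card V3 / c"
begin

lemma eps_parts_large:
  "real N + 24 * real c ^ 4 \<le> \<epsilon> * card V1" "real N + 24 * real c ^ 4 \<le> \<epsilon> * card V2"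
  "real N + 24 * real c ^ 4 \<le> \<epsilon> * card V3"
proof -
  have "real (card V3) / c \<le> real (card V1) / a" using ratios by linarith
  also have "\<dots> \<le> real (card V1) / 1" using abc by (intro frac_le) auto
  finally have "\<epsilon> * card V3 / c \<le> \<epsilon> * card V1"
    using eps mult_left_mono by fastforce
  moreover have "\<epsilon> * card V1 \<le> \<epsilon> * card V2" "\<epsilon> * card V2 \<le> \<epsilon> * card V3"
    using sizes eps by simp_all
  ultimately show "real N + 24 * real c ^ 4 \<le> \<epsilon> * card V1" "real N + 24 * real c ^ 4 \<le> \<epsilon> * card V2"
    "real N + 24 * real c ^ 4 \<le> \<epsilon> * card V3" using large by linarith+
qed

lemma Kabc_tiling_equal_parts:
  assumes "a = c"
  shows "\<exists>\<T>. is_Kabc_tiling H (V1 \<union> V2 \<union> V3) a b c \<T> \<and>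
    real (card ((V1 \<union> V2 \<union> V3) - (\<Union>T\<in>\<T>. copy_verts T))) \<le> \<epsilon> * real (card V1 + card V2 + card V3)"
proof -
  have abc_eq: "b = a" "c = a" using abc assms by auto
  then have V_eq: "card V2 = card V1" "card V3 = card V1"
    using ratios sizes abc by (auto simp: divide_le_cancel)
  define P where "P = (\<lambda>r1 r2 r3 :: nat. r1 = r2 \<and> r2 = r3)"
  have step: "real (card R1 + card R2 + card R3) \<le> \<epsilon> * real (card V1 + card V2 + card V3) \<or>
       (contains_complete_box H c R1 R2 R3 \<and>
        (\<exists>(k1, k2, k3)\<in>triple_perms a b c. P (card R1 - k1) (card R2 - k2) (card R3 - k3)))"
    if R: "R1 \<subseteq> V1" "R2 \<subseteq> V2" "R3 \<subseteq> V3" and "P (card R1) (card R2) (card R3)" for R1 R2 R3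
  proof (cases "card R1 < \<epsilon> * card V1")
    case True
    then show ?thesis using \<open>P _ _ _\<close> V_eq by (simp add: P_def algebra_simps)
  next
    case False
    moreover have "real N \<le> \<epsilon> * card V1" using eps_parts_large(1) zero_le_power[of "real c" 4] by linarith
    ultimately have "N \<le> card R1" by simp
    then have "contains_complete_box H c R1 R2 R3"
      using False \<open>P _ _ _\<close> V_eq by (intro box[OF R]) (simp_all add: P_def)
    moreover have "(a, a, a) \<in> triple_perms a b c" using abc_eq by (simp add: triple_perms_def)
    ultimately show ?thesis using \<open>P _ _ _\<close> by (force simp: P_def)
  qed
  have "a \<le> c" "b \<le> c" "0 < c" using abc by simp_all
  from greedy_Kabc_tiling[OF disj fin this step, of V1 V2 V3]
  show ?thesis using V_eq by (auto simp: P_def)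
qed

lemma excesses_balanced_initially:
  "balanced_excess a b c (card V1 - \<epsilon> * card V1) (card V2 - \<epsilon> * card V2) (card V3 - \<epsilon> * card V3)"
proof -
  define n1 n2 n3 where "n1 = real (card V1)" and "n2 = real (card V2)" and "n3 = real (card V3)"
  have "n1 \<le> n2" "n2 \<le> n3" "a * n2 \<le> b * n1" "b * n3 \<le> c * n2"
    using sizes ratios abc by (simp_all add: n1_def n2_def n3_def field_simps)
  then have "0 \<le> (1 - \<epsilon>) * (n2 - n1)" "0 \<le> (1 - \<epsilon>) * (n3 - n2)"
    "0 \<le> (1 - \<epsilon>) * (b * n1 - a * n2)" "0 \<le> (1 - \<epsilon>) * (c * n2 - b * n3)"
    using eps by simp_all
  moreover have "0 \<le> real c" by simp
  ultimately show ?thesis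
    unfolding balanced_excess_def n1_def[symmetric] n2_def[symmetric] n3_def[symmetric]
    by (simp add: algebra_simps)
qed

lemma greedy_step_unequal_parts:
  assumes R: "R1 \<subseteq> V1" "R2 \<subseteq> V2" "R3 \<subseteq> V3"
    and bal: "balanced_excess a b c (card R1 - \<epsilon> * card V1) (card R2 - \<epsilon> * card V2) (card R3 - \<epsilon> * card V3)"
  shows "real (card R1 + card R2 + card R3) \<le> \<epsilon> * real (card V1 + card V2 + card V3) + 24 * real c ^ 4 \<or>
    (contains_complete_box H c R1 R2 R3 \<and> (\<exists>(k1, k2, k3)\<in>triple_perms a b c.
       balanced_excess a b c (real (card R1 - k1) - \<epsilon> * card V1) (real (card R2 - k2) - \<epsilon> * card V2)
         (real (card R3 - k3) - \<epsilon> * card V3)))"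
proof -
  define s1 s2 s3 where "s1 = card R1 - \<epsilon> * card V1" and "s2 = card R2 - \<epsilon> * card V2"
    and "s3 = card R3 - \<epsilon> * card V3"
  have bal: "balanced_excess a b c s1 s2 s3" using bal by (simp add: s1_def s2_def s3_def)
  show ?thesis
  proof (cases "s1 < 4 * real c ^ 2 \<or> s2 < 4 * real c ^ 2 \<or> s3 < 4 * real c ^ 2")
    case True
    then have "s1 + s2 + s3 \<le> 24 * real c ^ 4" by (rule balanced_excess_sum_bound[OF abc bal])
    then show ?thesis by (simp add: s1_def s2_def s3_def algebra_simps)
  next
    case False
    then have s_large: "4 * real c ^ 2 \<le> s1" "4 * real c ^ 2 \<le> s2" "4 * real c ^ 2 \<le> s3" by auto
    have "real c \<le> 4 * real c ^ 2" using abc by (simp add: power2_eq_square)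
    then have R_ge: "real N + real c \<le> card R1" "real N + real c \<le> card R2" "real N + real c \<le> card R3"
      "\<epsilon> * card V1 \<le> card R1" "\<epsilon> * card V2 \<le> card R2" "\<epsilon> * card V3 \<le> card R3"
      using s_large eps_parts_large zero_le_power[of "real c" 4] of_nat_0_le_iff[of c]
      unfolding s1_def s2_def s3_def by linarith+
    then have "contains_complete_box H c R1 R2 R3" by (intro box[OF R]) simp_all
    moreover obtain k1 k2 k3 where k: "(k1, k2, k3) \<in> triple_perms a b c"
      and "balanced_excess a b c (s1 - k1) (s2 - k2) (s3 - k3)"
      using balanced_excess_step[OF abc bal s_large] by blast
    moreover have "k1 \<le> card R1" "k2 \<le> card R2" "k3 \<le> card R3"
      using k R_ge(1-3) abc by (auto simp: triple_perms_def)
    ultimately show ?thesis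
      by (intro disjI2 conjI bexI[OF _ k]) (simp_all add: s1_def s2_def s3_def algebra_simps)
  qed
qed

lemma unequal_parts_slack:
  assumes "a < c"
  shows "\<epsilon> * real (card V1 + card V2 + card V3) + 24 * real c ^ 4 \<le> c / a * \<epsilon> * real (card V1 + card V2 + card V3)"
proof -
  define n where "n = real (card V1 + card V2 + card V3)"
  have "(real a + 1) * c \<le> real c * c" using assms by (intro mult_right_mono) auto
  then have "1 + 1 / c \<le> c / a" using abc by (simp add: field_simps)
  then have "(1 + 1 / c) * (\<epsilon> * n) \<le> c / a * (\<epsilon> * n)"
    using eps by (intro mult_right_mono) (auto simp: n_def)
  moreover have "\<epsilon> * card V3 / c \<le> \<epsilon> * n / c"
    using eps by (intro divide_right_mono mult_left_mono) (auto simp: n_def)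
  ultimately show ?thesis
    using large unfolding n_def[symmetric] by (simp add: algebra_simps add_divide_distrib)
qed

lemma Kabc_tiling_unequal_parts:
  assumes "a < c"
  shows "\<exists>\<T>. is_Kabc_tiling H (V1 \<union> V2 \<union> V3) a b c \<T> \<and>
    real (card ((V1 \<union> V2 \<union> V3) - (\<Union>T\<in>\<T>. copy_verts T))) \<le> c / a * \<epsilon> * real (card V1 + card V2 + card V3)"
proof -
  define P where "P = (\<lambda>r1 r2 r3 :: nat.
    balanced_excess a b c (r1 - \<epsilon> * card V1) (r2 - \<epsilon> * card V2) (r3 - \<epsilon> * card V3))"
  define \<beta> where "\<beta> = c / a * \<epsilon> * real (card V1 + card V2 + card V3)"
  have step: "real (card R1 + card R2 + card R3) \<le> \<beta> \<or>
       (contains_complete_box H c R1 R2 R3 \<and>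
        (\<exists>(k1, k2, k3)\<in>triple_perms a b c. P (card R1 - k1) (card R2 - k2) (card R3 - k3)))"
    if "R1 \<subseteq> V1" "R2 \<subseteq> V2" "R3 \<subseteq> V3" "P (card R1) (card R2) (card R3)" for R1 R2 R3
    using greedy_step_unequal_parts[OF that(1-3) that(4)[unfolded P_def]] unequal_parts_slack[OF assms]
    unfolding P_def \<beta>_def by auto
  have "a \<le> c" "b \<le> c" "0 < c" using abc by simp_all
  from greedy_Kabc_tiling[OF disj fin this step, of V1 V2 V3]
  show ?thesis using excesses_balanced_initially by (auto simp: P_def \<beta>_def)
qed

lemma Kabc_tiling_almost_perfect:
  "\<exists>\<T>. is_Kabc_tiling H (V1 \<union> V2 \<union> V3) a b c \<T> \<and>
    real (card ((V1 \<union> V2 \<union> V3) - (\<Union>T\<in>\<T>. copy_verts T))) \<le> c / a * \<epsilon> * real (card V1 + card V2 + card V3)"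
proof (cases "a = c")
  case True
  then show ?thesis using Kabc_tiling_equal_parts abc by simp
next
  case False
  then show ?thesis using Kabc_tiling_unequal_parts abc by simp
qed

end

lemma empty_Kabc_tiling_bound:
  fixes \<beta> :: real
  assumes "1 \<le> \<beta>"
  shows "\<exists>\<T>. is_Kabc_tiling H (V1 \<union> V2 \<union> V3) a b c \<T> \<and>
    real (card ((V1 \<union> V2 \<union> V3) - (\<Union>T\<in>\<T>. copy_verts T))) \<le> \<beta> * real (card V1 + card V2 + card V3)"
proof (intro exI[of _ "{}"] conjI)
  have "card (V1 \<union> V2 \<union> V3) \<le> card V1 + card V2 + card V3" by (rule card_Un3_le)
  also have "real (card V1 + card V2 + card V3) \<le> \<beta> * real (card V1 + card V2 + card V3)"
    using mult_right_mono[OF assms, of "real (card V1 + card V2 + card V3)"] by simp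
  finally show "real (card ((V1 \<union> V2 \<union> V3) - (\<Union>T\<in>{}. copy_verts T))) \<le> \<beta> * real (card V1 + card V2 + card V3)"
    by simp
qed (simp add: is_Kabc_tiling_def)

lemma regular_triple_Kabc_tiling:
  fixes a b c :: nat and \<epsilon> :: real
  assumes abc: "0 < a" "a \<le> b" "b \<le> c" and eps: "0 < \<epsilon>" "\<epsilon> < 1"
  obtains M where "\<And>(H :: 'a set set) d V1 V2 V3. eps_d_regular H \<epsilon> d V1 V2 V3 \<Longrightarrow> 2 * \<epsilon> \<le> d \<Longrightarrow>
    finite V1 \<Longrightarrow> finite V2 \<Longrightarrow> finite V3 \<Longrightarrow> V1 \<inter> V2 = {} \<Longrightarrow> V1 \<inter> V3 = {} \<Longrightarrow> V2 \<inter> V3 = {} \<Longrightarrow>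
    card V1 \<le> card V2 \<Longrightarrow> card V2 \<le> card V3 \<Longrightarrow> M \<le> card V3 \<Longrightarrow>
    real (card V2) / b \<le> real (card V1) / a \<Longrightarrow> real (card V3) / c \<le> real (card V2) / b \<Longrightarrow>
    \<exists>\<T>. is_Kabc_tiling H (V1 \<union> V2 \<union> V3) a b c \<T> \<and>
      real (card ((V1 \<union> V2 \<union> V3) - (\<Union>T\<in>\<T>. copy_verts T))) \<le> c / a * \<epsilon> * real (card V1 + card V2 + card V3)"
proof -
  obtain N where box: "\<And>(H :: 'a set set) d V1 V2 V3 R1 R2 R3.
    eps_d_regular H \<epsilon> d V1 V2 V3 \<Longrightarrow> 2 * \<epsilon> \<le> d \<Longrightarrow>
    R1 \<subseteq> V1 \<Longrightarrow> R2 \<subseteq> V2 \<Longrightarrow> R3 \<subseteq> V3 \<Longrightarrow>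
    \<epsilon> * card V1 \<le> card R1 \<Longrightarrow> \<epsilon> * card V2 \<le> card R2 \<Longrightarrow> \<epsilon> * card V3 \<le> card R3 \<Longrightarrow>
    N \<le> card R1 \<Longrightarrow> N \<le> card R2 \<Longrightarrow> N \<le> card R3 \<Longrightarrow>
    contains_complete_box H c R1 R2 R3"
    using regular_triple_contains_complete_box[OF eps(1), of c] by blast
  show thesis
  proof (rule that[of "nat \<lceil>c * (N + 24 * real c ^ 4) / \<epsilon>\<rceil>"])
    fix H :: "'a set set" and d V1 V2 V3
    assume "eps_d_regular H \<epsilon> d V1 V2 V3" "2 * \<epsilon> \<le> d"
      and "nat \<lceil>c * (N + 24 * real c ^ 4) / \<epsilon>\<rceil> \<le> card V3"
    then have "real N + 24 * real c ^ 4 \<le> \<epsilon> * card V3 / c"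
      using abc eps by (simp add: field_simps)
    moreover assume "finite V1" "finite V2" "finite V3" "V1 \<inter> V2 = {}" "V1 \<inter> V3 = {}" "V2 \<inter> V3 = {}"
      "card V1 \<le> card V2" "card V2 \<le> card V3"
      "real (card V2) / b \<le> real (card V1) / a" "real (card V3) / c \<le> real (card V2) / b"
    ultimately show "\<exists>\<T>. is_Kabc_tiling H (V1 \<union> V2 \<union> V3) a b c \<T> \<and>
      real (card ((V1 \<union> V2 \<union> V3) - (\<Union>T\<in>\<T>. copy_verts T))) \<le> c / a * \<epsilon> * real (card V1 + card V2 + card V3)"
      using Kabc_tiling_almost_perfect[of a b c \<epsilon> V1 V2 V3 N H] box[of H d] abc eps
        \<open>eps_d_regular H \<epsilon> d V1 V2 V3\<close> \<open>2 * \<epsilon> \<le> d\<close> by simp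
  qed
qed

theorem proposition4p1:
  fixes a b c :: nat and \<epsilon> d :: real
  assumes "0 < a" "a \<le> b" "b \<le> c" "0 < 2 * \<epsilon>" "2 * \<epsilon> \<le> d"
  shows "\<exists>M::nat. \<forall>m\<ge>M. \<forall>(VH :: 'a set) H V1 V2 V3.
     three_graph VH H \<longrightarrow>
     V1 \<subseteq> VH \<longrightarrow> V2 \<subseteq> VH \<longrightarrow> V3 \<subseteq> VH \<longrightarrow>
     finite V1 \<longrightarrow> finite V2 \<longrightarrow> finite V3 \<longrightarrow>
     V1 \<inter> V2 = {} \<longrightarrow> V1 \<inter> V3 = {} \<longrightarrow> V2 \<inter> V3 = {} \<longrightarrow>
     V1 \<noteq> {} \<longrightarrow> V2 \<noteq> {} \<longrightarrow> V3 \<noteq> {} \<longrightarrow>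
     eps_d_regular H \<epsilon> d V1 V2 V3 \<longrightarrow>
     card V1 \<le> card V2 \<longrightarrow> card V2 \<le> card V3 \<longrightarrow> card V3 = m \<longrightarrow>
     real (card V1) / real a \<ge> real (card V2) / real b \<longrightarrow>
     real (card V2) / real b \<ge> real (card V3) / real c \<longrightarrow>
     (\<exists>\<T>. is_Kabc_tiling H (V1 \<union> V2 \<union> V3) a b c \<T> \<and>
        real (card ((V1 \<union> V2 \<union> V3) - (\<Union>T\<in>\<T>. copy_verts T)))
          \<le> real c / real a * \<epsilon> * real (card V1 + card V2 + card V3))"
proof (cases "\<epsilon> < 1")
  case True
  have "0 < \<epsilon>" using assms(4) by simp
  show ?thesis
    apply (rule regular_triple_Kabc_tiling[where 'a = 'a, OF assms(1-3) \<open>0 < \<epsilon>\<close> True])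
    subgoal premises tiling for M
      using assms(5) by (intro exI[of _ M] allI impI tiling) auto
    done
next
  case False
  \<comment> \<open>then the bound is at least the number of vertices and the empty tiling will do\<close>
  have "1 * 1 \<le> real c / real a * \<epsilon>"
    using assms False by (intro mult_mono) auto
  then show ?thesis
    by (intro exI[of _ 0] allI impI empty_Kabc_tiling_bound) simp
qed

end
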